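(* Let $X$ be a nonempty set, $f:X\to X$ a function, and $\tau_2$ the fuzzy topology on $X$ defined below. Then $(X,\tau_2)$ is regular if and only if $f$ is onto.
   Context: A fuzzy subset of $X$ is a function $\mu:X\to[0,1]$; union is the pointwise supremum, intersection the pointwise minimum, complement $1-\mu$; $\emptyset$ is the constant $0$ and $X$ the constant $1$. A fuzzy topology is a family of fuzzy subsets containing $\emptyset$ and $X$, closed under arbitrary unions and finite intersections; complements of open fuzzy sets are closed; the topology generated by a base $\mathbb{B}$ consists of $\emptyset$ and all unions of subfamilies of $\mathbb{B}$. $\mathbb{N}=\{1,2,\dots\}$, $f^0=\mathrm{id}_X$, $f^{n+1}=f^n\circ f$. Definition of $\tau_2$: $J_0=\bigcap_{n\in\mathbb{N}} f^n(X)$, $J_n=f^{n-1}(X)\setminus f^n(X)$ for $n\in\mathbb{N}$; for $m\in\mathbb{N}$, $\mu_{K_m}(x)=\min\{1,n/m\}$ if $x\in J_n$ with $n\ge1$, and $\mu_{K_m}(x)=1$ otherwise; $\tau_2$ is generated by the base $\{K_m:m\in\mathbb{N}\}$. A fuzzy point $x_p$ ($x\in X$, $0<p\le1$) belongs to a fuzzy set $F$ iff $p\le\mu_F(x)$. The space is regular if for every fuzzy point $x_p$ and every closed fuzzy set $F$ with $x_p\notin F$ there exist open fuzzy sets $U,V$ with $x_p\in U$, $F\subseteq V$ and $U\cap V=\emptyset$. *)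

theory Defs
  imports Complex_Main
begin

text \<open>Fuzzy subsets of the ambient type 'a are functions 'a \<Rightarrow> real
  (with values in [0,1]). The set X is the (nonempty) universe of type 'a.\<close>

definition fuzzy_closed :: "('a \<Rightarrow> real) set \<Rightarrow> ('a \<Rightarrow> real) \<Rightarrow> bool" where
  "fuzzy_closed T F \<longleftrightarrow> (\<lambda>x. 1 - F x) \<in> T"

text \<open>Fuzzy point x_p belongs to F iff p \<le> F x.\<close>
definition fuzzy_regular :: "('a \<Rightarrow> real) set \<Rightarrow> bool" where
  "fuzzy_regular T \<longleftrightarrow>
     (\<forall>x p F. 0 < p \<and> p \<le> 1 \<and> fuzzy_closed T F \<and> \<not> (p \<le> F x) \<longrightarrow>
        (\<exists>U V. U \<in> T \<and> V \<in> T \<and> p \<le> U x \<and> (\<forall>y. F y \<le> V y)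
               \<and> (\<lambda>y. min (U y) (V y)) = (\<lambda>y. 0)))"

definition J0 :: "('a \<Rightarrow> 'a) \<Rightarrow> 'a set" where
  "J0 f = (\<Inter>n\<in>{1..}. range (f ^^ n))"

definition J :: "('a \<Rightarrow> 'a) \<Rightarrow> nat \<Rightarrow> 'a set" where
  "J f n = range (f ^^ (n - 1)) - range (f ^^ n)"

definition K :: "('a \<Rightarrow> 'a) \<Rightarrow> nat \<Rightarrow> 'a \<Rightarrow> real" where
  "K f m x = (if \<exists>n\<ge>1. x \<in> J f n
              then min 1 (real (THE n. n \<ge> 1 \<and> x \<in> J f n) / real m)
              else 1)"

definition tau2_base :: "('a \<Rightarrow> 'a) \<Rightarrow> ('a \<Rightarrow> real) set" where
  "tau2_base f = {K f m | m. m \<ge> 1}"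

text \<open>Topology generated by the base: the empty fuzzy set together with all
  unions (pointwise suprema) of nonempty subfamilies of the base (the union of
  the empty subfamily is the empty fuzzy set).\<close>
definition tau2 :: "('a \<Rightarrow> 'a) \<Rightarrow> ('a \<Rightarrow> real) set" where
  "tau2 f = insert (\<lambda>x. 0)
     {(\<lambda>x. SUP B\<in>S. B x) | S. S \<noteq> {} \<and> S \<subseteq> tau2_base f}"

end

theory Submission
  imports Defs
begin

text \<open>Every nonzero open set of \<open>\<tau>\<^sub>2\<close> is strictly positive everywhere, so two open sets
  can only be disjoint if one of them is empty. If some \<open>x\<^sub>0\<close> is not in the range
  of \<open>f\<close>, then \<open>x\<^sub>0 \<in> J\<^sub>1\<close> and \<open>K\<^sub>2(x\<^sub>0) = 1/2\<close>; separating the fuzzy point \<open>x\<^sub>0\<close> of height 1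
  from the closed set \<open>1 - K\<^sub>2\<close> would need two nonempty disjoint open sets. If \<open>f\<close> is
  onto, every \<open>J\<^sub>n\<close> is empty, all \<open>K\<^sub>m\<close> are the constant 1, and \<open>\<tau>\<^sub>2\<close> is the indiscrete
  fuzzy topology, which is trivially regular.\<close>

lemma range_funpow_antimono:
  assumes "m \<le> n"
  shows "range ((f :: 'a \<Rightarrow> 'a) ^^ n) \<subseteq> range (f ^^ m)"
proof -
  have "f ^^ n = f ^^ m \<circ> f ^^ (n - m)"
    using assms by (simp flip: funpow_add)
  then show ?thesis by auto
qed

lemma J_unique:
  assumes "x \<in> J f n" "x \<in> J f n'"
  shows "n = n'"
proof -
  have False if "x \<in> J f a" "x \<in> J f b" "a < b" for a b
  proof -
    have "x \<in> range (f ^^ (b - 1))"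
      using that(2) unfolding J_def by simp
    also have "\<dots> \<subseteq> range (f ^^ a)"
      using that(3) by (intro range_funpow_antimono) simp
    finally show False
      using that(1) unfolding J_def by simp
  qed
  then show ?thesis
    using assms by (metis linorder_neqE_nat)
qed

lemma K_on_J:
  assumes "x \<in> J f n" "n \<ge> 1"
  shows "K f m x = min 1 (real n / real m)"
proof -
  have "(THE n. n \<ge> 1 \<and> x \<in> J f n) = n"
    using assms J_unique[of x f] by (intro the_equality) auto
  then show ?thesis
    using assms unfolding K_def by auto
qed

lemma K_pos:
  assumes "m \<ge> 1"
  shows "K f m x > 0"
proof (cases "\<exists>n\<ge>1. x \<in> J f n")
  case True
  then obtain n where "n \<ge> 1" "x \<in> J f n" by blast
  then show ?thesis
    using assms K_on_J[of x f n m] by simp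
next
  case False
  then show ?thesis
    unfolding K_def by (simp only: if_False)
qed

lemma K_le_one: "K f m x \<le> 1"
  unfolding K_def by auto

lemma K_in_tau2:
  assumes "m \<ge> 1"
  shows "K f m \<in> tau2 f"
proof -
  have "K f m = (\<lambda>x. SUP B\<in>{K f m}. B x)" by simp
  moreover have "{K f m} \<subseteq> tau2_base f"
    using assms unfolding tau2_base_def by auto
  ultimately show ?thesis
    unfolding tau2_def by blast
qed

lemma tau2_pos:
  assumes "U \<in> tau2 f" "U \<noteq> (\<lambda>x. 0)"
  shows "U x > 0"
proof -
  obtain S where S: "S \<noteq> {}" "S \<subseteq> tau2_base f" "U = (\<lambda>x. SUP B\<in>S. B x)"
    using assms unfolding tau2_def by auto
  obtain m where m: "m \<ge> 1" "K f m \<in> S"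
    using S(1,2) unfolding tau2_base_def by blast
  have "bdd_above ((\<lambda>B. B x) ` S)"
    using S(2) K_le_one unfolding tau2_base_def bdd_above_def by fastforce
  then have "K f m x \<le> U x"
    using cSUP_upper[OF m(2)] S(3) by simp
  then show ?thesis
    using K_pos[OF m(1), of f x] by linarith
qed

lemma fuzzy_regular_open_values:
  assumes reg: "fuzzy_regular T"
    and pos: "\<And>U y. U \<in> T \<Longrightarrow> U \<noteq> (\<lambda>y. 0) \<Longrightarrow> U y > 0"
    and G: "G \<in> T" "G x > 0"
  shows "G x \<ge> 1"
proof (rule ccontr)
  assume "\<not> G x \<ge> 1"
  define F where "F = (\<lambda>y. 1 - G y)"
  have "fuzzy_closed T F"
    unfolding fuzzy_closed_def F_def using G(1) by simp
  moreover have "\<not> 1 \<le> F x"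
    unfolding F_def using G(2) by simp
  ultimately obtain U V where UV: "U \<in> T" "V \<in> T" "1 \<le> U x" "\<forall>y. F y \<le> V y"
      "(\<lambda>y. min (U y) (V y)) = (\<lambda>y. 0)"
    using reg[unfolded fuzzy_regular_def, rule_format, where x = x and p = 1 and F = F] by auto
  have "V x > 0"
    using UV(4) \<open>\<not> G x \<ge> 1\<close> unfolding F_def by (metis less_le_trans not_le diff_gt_0_iff_gt)
  then have "V y > 0" for y
    using pos[OF UV(2)] by fastforce
  moreover have "U y > 0" for y
    using pos[OF UV(1)] UV(3) by fastforce
  ultimately show False
    using fun_cong[OF UV(5), of x] by (metis min_less_iff_conj less_irrefl)
qed

lemma fuzzy_regular_indiscrete: "fuzzy_regular {\<lambda>x. 0, \<lambda>x. 1}"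
  unfolding fuzzy_regular_def fuzzy_closed_def
proof (intro allI impI)
  fix x p and F :: "'a \<Rightarrow> real"
  assume a: "0 < p \<and> p \<le> 1 \<and> (\<lambda>x. 1 - F x) \<in> {\<lambda>x. 0, \<lambda>x. 1} \<and> \<not> p \<le> F x"
  then have "(\<lambda>x. 1 - F x) = (\<lambda>x. 1)"
    by (auto dest!: fun_cong[of _ _ x])
  then have "F y = 0" for y
    by (auto dest!: fun_cong[of _ _ y])
  then show "\<exists>U V. U \<in> {\<lambda>x. 0, \<lambda>x. 1} \<and> V \<in> {\<lambda>x. 0, \<lambda>x. 1} \<and> p \<le> U x
      \<and> (\<forall>y. F y \<le> V y) \<and> (\<lambda>y. min (U y) (V y)) = (\<lambda>y. 0)"
    using a by (intro exI[of _ "\<lambda>x. 1"] exI[of _ "\<lambda>x. 0"]) auto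
qed

lemma K_surj:
  assumes "surj f"
  shows "K f m = (\<lambda>x. 1)"
proof -
  have "J f n = {}" for n
    using surj_fn[OF assms] unfolding J_def by simp
  then show ?thesis
    unfolding K_def by simp
qed

lemma tau2_surj:
  assumes "surj f"
  shows "tau2 f = {\<lambda>x. 0, \<lambda>x. 1}"
proof -
  have "tau2_base f = {\<lambda>x. 1}"
    unfolding tau2_base_def K_surj[OF assms] by auto
  then have "S \<noteq> {} \<and> S \<subseteq> tau2_base f \<longleftrightarrow> S = {\<lambda>x. 1}" for S
    by (simp add: subset_singleton_iff) blast
  then show ?thesis
    unfolding tau2_def by simp
qed

theorem proposition3p10:
  fixes f :: "'a \<Rightarrow> 'a"
  shows "fuzzy_regular (tau2 f) \<longleftrightarrow> surj f"
proof
  assume reg: "fuzzy_regular (tau2 f)"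
  show "surj f"
  proof (rule ccontr)
    assume "\<not> surj f"
    then obtain x0 where "x0 \<in> J f 1"
      unfolding J_def by auto
    then have "K f 2 x0 = 1 / 2"
      using K_on_J[of x0 f 1 2] by simp
    moreover have "K f 2 x0 \<ge> 1"
      using reg tau2_pos K_in_tau2 K_pos by (rule fuzzy_regular_open_values) simp_all
    ultimately show False by simp
  qed
next
  assume "surj f"
  then show "fuzzy_regular (tau2 f)"
    using tau2_surj fuzzy_regular_indiscrete by metis
qed

end
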